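(* Fix $R>0$. For $\theta_0\in[0,2\pi)$, $\varphi_0\in[0,2\pi)$ and $\tau\geq 0$ define $$\mathbf r_0(\theta_0,\varphi_0)=(-R\cos\theta_0\cos\varphi_0,\;R\cos\theta_0\sin\varphi_0,\;R\sin\theta_0),\qquad \mathbf p_0(\theta_0,\varphi_0)=(\sin\theta_0\cos\varphi_0,\;-\sin\theta_0\sin\varphi_0,\;\cos\theta_0),$$ and the ray map $F(\theta_0,\varphi_0,\tau)=\mathbf r_0(\theta_0,\varphi_0)+\tau\,\mathbf p_0(\theta_0,\varphi_0)\in\mathbb R^3$. Then the caustic of this family of rays, i.e. the set $$\{F(\theta_0,\varphi_0,\tau)\;:\;\det DF(\theta_0,\varphi_0,\tau)=0\}$$ (where $DF$ is the Jacobian matrix of $(x,y,z)=F$ with respect to $(\theta_0,\varphi_0,\tau)$), is the union of (a) the sphere $\{\mathbf x\in\mathbb R^3:|\mathbf x|=R\}$ (the surface of the ball, envelope of the diffracted rays) and (b) the two semiaxes $\mathcal A_+=\{(0,0,z):z\geq R\}$ and $\mathcal A_-=\{(0,0,z):z\leq -R\}$ (the axial caustic).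
   Context: Physical setting: a spherical obstacle (ball of radius $R$ centred at the origin of Cartesian coordinates $(x,y,z)$) is illuminated by a beam of rays parallel to the $z$-axis coming from $z=-\infty$; rays grazing the sphere travel along meridians and leave it tangentially. The point $\mathbf r_0$ is the point on the sphere where the ray leaves the surface ($\theta_0$ is the angle measured along the meridian from the point of incidence, $\varphi_0$ the azimuthal angle), $\mathbf p_0$ is the unit tangent vector there, and $\tau\ge 0$ is the arclength parameter along the emerging straight ray. The extended symmetry axis of the ball is the $z$-axis, $\mathcal A_-$ is its part on the illuminated side and $\mathcal A_+$ its part in the shadow. *)

theory Defs
  imports "HOL-Analysis.Analysis"
begin

definition r0 :: "real \<Rightarrow> real \<Rightarrow> real \<Rightarrow> real^3" where
  "r0 R th ph = vector [- R * cos th * cos ph, R * cos th * sin ph, R * sin th]"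

definition p0 :: "real \<Rightarrow> real \<Rightarrow> real^3" where
  "p0 th ph = vector [sin th * cos ph, - sin th * sin ph, cos th]"

text \<open>Ray map F, with argument v = (theta0, phi0, tau) = (v$1, v$2, v$3).\<close>
definition rayF :: "real \<Rightarrow> real^3 \<Rightarrow> real^3" where
  "rayF R v = r0 R (v$1) (v$2) + (v$3) *\<^sub>R p0 (v$1) (v$2)"

definition caustic :: "real \<Rightarrow> (real^3) set" where
  "caustic R = {rayF R v | v. v$1 \<in> {0..<2*pi} \<and> v$2 \<in> {0..<2*pi} \<and> v$3 \<ge> 0
                  \<and> det (jacobian (rayF R) (at v)) = 0}"

end

theory Submission imports Defs begin

text \<open>Writing \<open>\<rho> = \<tau> sin \<theta>\<^sub>0 - R cos \<theta>\<^sub>0\<close>, the ray map is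
  \<open>F = (\<rho> cos \<phi>\<^sub>0, -\<rho> sin \<phi>\<^sub>0, R sin \<theta>\<^sub>0 + \<tau> cos \<theta>\<^sub>0)\<close> and its Jacobian determinant is
  \<open>-\<rho> \<tau>\<close>. The critical set therefore splits into \<open>\<tau> = 0\<close>, whose image is the sphere of exit
  points, and \<open>\<rho> = 0\<close>, where the ray meets the axis at height \<open>z\<close> with
  \<open>z\<^sup>2 = z\<^sup>2 + \<rho>\<^sup>2 = R\<^sup>2 + \<tau>\<^sup>2 \<ge> R\<^sup>2\<close>. Conversely every point of the sphere and of the two
  semiaxes is attained, by choosing the angles as polar angles of suitable points of a circle.\<close>

lemma rayF_components:
  "rayF R v = vector [cos (v$2) * (v$3 * sin (v$1) - R * cos (v$1)),
      - sin (v$2) * (v$3 * sin (v$1) - R * cos (v$1)), R * sin (v$1) + v$3 * cos (v$1)]"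
  by (simp add: rayF_def r0_def p0_def vec_eq_iff forall_3 algebra_simps)

definition ray_jacobian :: "real \<Rightarrow> real^3 \<Rightarrow> real^3^3" where
  "ray_jacobian R v = (let t = v$1; p = v$2; s = v$3 in
     vector [vector [cos p * (s * cos t + R * sin t), - sin p * (s * sin t - R * cos t), cos p * sin t],
             vector [- sin p * (s * cos t + R * sin t), - cos p * (s * sin t - R * cos t), - sin p * sin t],
             vector [R * cos t - s * sin t, 0, cos t]])"

lemma has_derivative_rayF: "(rayF R has_derivative (\<lambda>h. ray_jacobian R v *v h)) (at v)"
proof -
  have nth: "((\<lambda>v::real^3. v$i) has_derivative (\<lambda>h. h$i)) (at v)" for i
    by (rule bounded_linear_imp_has_derivative[OF bounded_linear_vec_nth])
  have "rayF R = (\<lambda>v. (- R * cos (v$1) * cos (v$2) + v$3 * (sin (v$1) * cos (v$2))) *\<^sub>R axis 1 1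
     + (R * cos (v$1) * sin (v$2) + v$3 * (- sin (v$1) * sin (v$2))) *\<^sub>R axis 2 1
     + (R * sin (v$1) + v$3 * cos (v$1)) *\<^sub>R axis 3 1)"
    by (rule ext) (simp add: rayF_def r0_def p0_def vec_eq_iff forall_3 axis_def)
  then show ?thesis
    apply simp
    apply (rule derivative_eq_intros nth | simp)+
    apply (rule ext)
    apply (simp add: ray_jacobian_def Let_def vec_eq_iff forall_3 matrix_vector_mult_def sum_3
        axis_def algebra_simps)
    done
qed

lemma jacobian_rayF: "jacobian (rayF R) (at v) = ray_jacobian R v"
  unfolding jacobian_def frechet_derivative_at[OF has_derivative_rayF, symmetric]
  by (simp add: matrix_of_matrix_vector_mul)

lemma det_jacobian_rayF:
  "det (jacobian (rayF R) (at v)) = - (v$3 * sin (v$1) - R * cos (v$1)) * v$3"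
  unfolding jacobian_rayF det_3 ray_jacobian_def Let_def vector_3
  using sin_cos_squared_add[of "v$1"] sin_cos_squared_add[of "v$2"] by algebra

lemma caustic_eq:
  "caustic R = {rayF R v | v. v$1 \<in> {0..<2*pi} \<and> v$2 \<in> {0..<2*pi} \<and> v$3 \<ge> 0
                  \<and> (v$3 = 0 \<or> v$3 * sin (v$1) = R * cos (v$1))}"
  unfolding caustic_def det_jacobian_rayF by auto

lemma norm_vec3: "norm (x::real^3) = sqrt (x$1^2 + x$2^2 + x$3^2)"
  by (simp add: norm_vec_def L2_set_def sum_3)

lemma norm_rayF_of_exit_point:
  assumes "v$3 = 0"
  shows "norm (rayF R v) = \<bar>R\<bar>"
proof -
  have "(cos (v$2) * (R * cos (v$1)))^2 + (sin (v$2) * (R * cos (v$1)))^2 + (R * sin (v$1))^2 = R^2"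
    using sin_cos_squared_add[of "v$1"] sin_cos_squared_add[of "v$2"] by algebra
  then show ?thesis
    using assms by (simp add: norm_vec3 rayF_components)
qed

lemma rayF_on_axis:
  assumes "v$3 * sin (v$1) = R * cos (v$1)"
  defines "z \<equiv> R * sin (v$1) + v$3 * cos (v$1)"
  shows "rayF R v = vector [0, 0, z]" and "z^2 = R^2 + (v$3)^2"
proof -
  show "rayF R v = vector [0, 0, z]"
    using assms by (simp add: rayF_components)
  have "z^2 = z^2 + (v$3 * sin (v$1) - R * cos (v$1))^2"
    using assms by simp
  also have "\<dots> = R^2 + (v$3)^2"
    unfolding z_def using sin_cos_squared_add[of "v$1"] by algebra
  finally show "z^2 = R^2 + (v$3)^2" .
qed

lemma polar_angle_2pi:
  fixes a b r :: real
  assumes "a^2 + b^2 = r^2" "r \<ge> 0"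
  obtains t where "0 \<le> t" "t < 2*pi" "a = r * cos t" "b = r * sin t"
proof (cases "r = 0")
  case True
  with assms have "a = 0" "b = 0" by (auto simp: sum_power2_eq_zero_iff)
  with True show ?thesis using that[of 0] by simp
next
  case False
  with assms have "(a/r)^2 + (b/r)^2 = 1"
    by (simp add: power_divide add_divide_distrib[symmetric])
  then obtain t where "0 \<le> t" "t < 2*pi" "a/r = cos t" "b/r = sin t"
    by (rule sincos_total_2pi)
  with False show ?thesis using that[of t] by (simp add: field_simps)
qed

text \<open>Spherical coordinates in the convention of \<open>r0\<close>: \<open>\<theta>\<^sub>0\<close> is the polar angle of
  \<open>(\<surd>(x\<^sub>1\<^sup>2 + x\<^sub>2\<^sup>2), x\<^sub>3)\<close>, and \<open>\<phi>\<^sub>0\<close> that of \<open>(-x\<^sub>1, x\<^sub>2)\<close>.\<close>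
lemma sphere_point_eq_exit_point:
  assumes "R > 0" "norm x = R"
  obtains th ph where "th \<in> {0..<2*pi}" "ph \<in> {0..<2*pi}" "x = rayF R (vector [th, ph, 0])"
proof -
  define q where "q = sqrt (x$1^2 + x$2^2)"
  have q2: "q^2 = x$1^2 + x$2^2" and "q \<ge> 0"
    unfolding q_def by simp_all
  have "q^2 + (x$3)^2 = R^2"
    using assms q2 by (metis add_nonneg_nonneg norm_vec3 real_sqrt_pow2 zero_le_power2)
  then obtain th where th: "0 \<le> th" "th < 2*pi" "q = R * cos th" "x$3 = R * sin th"
    using polar_angle_2pi[of q "x$3" R] \<open>R > 0\<close> by auto
  obtain ph where ph: "0 \<le> ph" "ph < 2*pi" "- x$1 = q * cos ph" "x$2 = q * sin ph"
    using polar_angle_2pi[of "- x$1" "x$2" q] q2 \<open>q \<ge> 0\<close> by auto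
  have "x = rayF R (vector [th, ph, 0])"
    using th ph by (simp add: rayF_components vec_eq_iff forall_3 algebra_simps)
  with th ph show ?thesis using that by auto
qed

text \<open>An axis point at height \<open>z\<close> is hit by the meridian ray with \<open>\<tau> = \<surd>(z\<^sup>2 - R\<^sup>2)\<close>
  whose exit angle \<open>\<theta>\<^sub>0\<close> is the polar angle of \<open>(\<tau>, R)/z\<close>.\<close>
lemma axis_point_eq_ray_point:
  assumes "R > 0" "R \<le> \<bar>z\<bar>"
  obtains th s where "th \<in> {0..<2*pi}" "s \<ge> 0" "s * sin th = R * cos th"
    "vector [0, 0, z] = rayF R (vector [th, 0, s])"
proof -
  define s where "s = sqrt (z^2 - R^2)"
  have "R^2 \<le> z^2"
    using assms by (metis abs_le_square_iff abs_of_pos)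
  then have s2: "s^2 = z^2 - R^2" and "s \<ge> 0"
    unfolding s_def by simp_all
  have z: "z \<noteq> 0"
    using assms by auto
  have "(s/z)^2 + (R/z)^2 = 1"
    using s2 z by (simp add: power_divide field_simps)
  then obtain th where th: "0 \<le> th" "th < 2*pi" "s/z = cos th" "R/z = sin th"
    by (rule sincos_total_2pi)
  have axis: "s * sin th = R * cos th"
    using z by (simp flip: th(3,4) add: field_simps)
  have "R * sin th + s * cos th = z"
    using z s2 by (simp flip: th(3,4) add: field_simps power2_eq_square)
  then have "vector [0, 0, z] = rayF R (vector [th, 0, s])"
    using axis by (simp add: rayF_components)
  with th axis \<open>s \<ge> 0\<close> show ?thesis using that by auto
qed

theorem proposition6:
  fixes R :: real
  assumes "R > 0"
  shows "caustic R = sphere 0 R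
           \<union> {vector [0, 0, z] | z. z \<ge> R}
           \<union> {vector [0, 0, z] | z. z \<le> - R}"
proof (rule set_eqI, rule iffI)
  fix x assume "x \<in> caustic R"
  then obtain v where x: "x = rayF R v" and "v$3 \<ge> 0"
    and "v$3 = 0 \<or> v$3 * sin (v$1) = R * cos (v$1)"
    unfolding caustic_eq by auto
  then consider "norm x = R" | z where "x = vector [0, 0, z]" "R^2 \<le> z^2"
    using norm_rayF_of_exit_point rayF_on_axis assms by fastforce
  then show "x \<in> sphere 0 R \<union> {vector [0, 0, z] | z. z \<ge> R} \<union> {vector [0, 0, z] | z. z \<le> - R}"
    using assms by cases (auto simp: abs_le_square_iff[symmetric] abs_if split: if_splits)
next
  fix x :: "real^3"
  assume "x \<in> sphere 0 R \<union> {vector [0, 0, z] | z. z \<ge> R} \<union> {vector [0, 0, z] | z. z \<le> - R}"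
  then consider "norm x = R" | z where "x = vector [0, 0, z]" "R \<le> \<bar>z\<bar>"
    by fastforce
  then show "x \<in> caustic R"
  proof cases
    case 1
    then show ?thesis
      using assms unfolding caustic_eq by (elim sphere_point_eq_exit_point) force+
  next
    case 2
    then show ?thesis
      using assms unfolding caustic_eq by (elim axis_point_eq_ray_point) force+
  qed
qed

end
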